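(* Let $N$ be even. Let $\rho_0=\sum_{n=1}^Np_n|n\rangle\langle n|$ be a full-rank density matrix on $\mathbb{C}^N$, and let $G$ be a Hermitian operator with $\langle n|G|m\rangle\in\mathbb{R}$ for all $n,m$. Let $\rho_\lambda=e^{-i\lambda G}\rho_0e^{i\lambda G}$, and let $L_0$ be its symmetric logarithmic derivative at $\lambda=0$. Assume $L_0$ is full rank. Then: (3.1) $L_0$ is diagonal in an orthonormal basis $\{|\alpha_{i,k}\rangle: i=\pm,\ k=1,\dots,N/2\}$ whose eigenvalues are opposite in pairs: $L_0|\alpha_{\pm,k}\rangle=\pm\alpha_{+,k}|\alpha_{\pm,k}\rangle$ with $\alpha_{+,k}\in\mathbb{R}\setminus\{0\}$. (3.2) Let $V:\mathbb{C}^N\to\mathbb{C}^2\otimes\mathbb{C}^{N/2}$ be the unitary defined by $V|\alpha_{i,k}\rangle=|i\rangle\otimes|k\rangle$. Here $\{|+\rangle,|-\rangle\}$ is the eigenbasis of a Pauli operator $S_y$ on $\mathbb{C}^2$ with $S_y|\pm\rangle=\pm|\pm\rangle$, and $\{|k\rangle\}$ is an orthonormal basis of $\mathbb{C}^{N/2}$. Under this factorization $\mathcal{H}_N\cong\mathcal{H}_2\otimes\mathcal{H}_{N/2}$, the SLD takes the product form $$VL_0V^\dagger=S_y\otimes\sum_{k=1}^{N/2}\alpha_{+,k}\,\Pi_k,\qquad \Pi_k=|k\rangle\langle k|.$$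
   Context: The symmetric logarithmic derivative $L_0$ is the Hermitian operator satisfying $\partial_\lambda\rho_\lambda|_{\lambda=0}=-i[G,\rho_0]=(\rho_0L_0+L_0\rho_0)/2$; it is unique because $\rho_0$ is full rank. *)

theory Defs
  imports "Jordan_Normal_Form.Schur_Decomposition"
begin

definition diag_state :: "nat \<Rightarrow> (nat \<Rightarrow> real) \<Rightarrow> complex mat" where
  "diag_state N p = mat N N (\<lambda>(i,j). if i = j then complex_of_real (p i) else 0)"

(* Symmetric logarithmic derivative of rho_lambda = exp(-i lambda G) rho0 exp(i lambda G)
   at lambda = 0:  Hermitian L with -i[G,rho0] = (rho0 L + L rho0)/2. *)
definition is_SLD :: "nat \<Rightarrow> complex mat \<Rightarrow> complex mat \<Rightarrow> complex mat \<Rightarrow> bool" where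
  "is_SLD N G rho0 L \<longleftrightarrow> L \<in> carrier_mat N N \<and> mat_adjoint L = L \<and>
     (- \<i>) \<cdot>\<^sub>m (G * rho0 - rho0 * G) = (1/2 :: complex) \<cdot>\<^sub>m (rho0 * L + L * rho0)"

definition S_y :: "complex mat" where
  "S_y = mat 2 2 (\<lambda>(i,j). if i = 0 \<and> j = 1 then - \<i> else if i = 1 \<and> j = 0 then \<i> else 0)"

(* Kronecker (tensor) products; C^a \<otimes> C^b identified with C^(a*b) via (i,k) \<mapsto> i*b + k *)
definition kron_vec :: "complex vec \<Rightarrow> complex vec \<Rightarrow> complex vec" where
  "kron_vec u w = vec (dim_vec u * dim_vec w)
     (\<lambda>j. u $ (j div dim_vec w) * w $ (j mod dim_vec w))"

definition kron_mat :: "complex mat \<Rightarrow> complex mat \<Rightarrow> complex mat" where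
  "kron_mat A B = mat (dim_row A * dim_row B) (dim_col A * dim_col B)
     (\<lambda>(r,c). A $$ (r div dim_row B, c div dim_col B) * B $$ (r mod dim_row B, c mod dim_col B))"

definition outer :: "complex vec \<Rightarrow> complex vec \<Rightarrow> complex mat" where
  "outer u v = mat (dim_vec u) (dim_vec v) (\<lambda>(r,c). u $ r * cnj (v $ c))"

definition mat_sum :: "nat \<Rightarrow> nat set \<Rightarrow> (nat \<Rightarrow> complex mat) \<Rightarrow> complex mat" where
  "mat_sum m K f = mat m m (\<lambda>(r,c). \<Sum>k\<in>K. f k $$ (r,c))"

definition unitary_mat :: "nat \<Rightarrow> complex mat \<Rightarrow> bool" where
  "unitary_mat n V \<longleftrightarrow> V \<in> carrier_mat n n \<and> mat_adjoint V * V = 1\<^sub>m n \<and> V * mat_adjoint V = 1\<^sub>m n"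

definition orthonormal_fam :: "nat \<Rightarrow> ('i \<Rightarrow> complex vec) \<Rightarrow> 'i set \<Rightarrow> bool" where
  "orthonormal_fam n v I \<longleftrightarrow> (\<forall>i\<in>I. v i \<in> carrier_vec n) \<and>
     (\<forall>i\<in>I. \<forall>j\<in>I. v j \<bullet>c v i = (if i = j then 1 else 0))"

end

theory Submission
  imports Defs "Jordan_Normal_Form.Spectral_Radius"
begin

text \<open>
  Since \<open>\<rho>\<^sub>0\<close> is diagonal with positive weights and \<open>G\<close> is real, the SLD equation gives
  \<open>L\<^sub>n\<^sub>m = 2i G\<^sub>n\<^sub>m (p\<^sub>n - p\<^sub>m) / (p\<^sub>n + p\<^sub>m)\<close>: \<open>L\<close> is Hermitian with purely imaginary
  entries, so complex conjugation maps an eigenvector of eigenvalue \<open>\<alpha>\<close> to one of eigenvalue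
  \<open>-\<alpha>\<close>. Diagonalise \<open>L\<close> by an orthonormal eigenbasis \<open>v\<^sub>j\<close> with real, nonzero eigenvalues.
  Then \<open>v\<^sub>j \<bottom> conj v\<^sub>k\<close> whenever the eigenvalues of \<open>v\<^sub>j\<close> and \<open>v\<^sub>k\<close> have the same sign, and
  summing \<open>|\<langle>v\<^sub>j, conj v\<^sub>k\<rangle>|\<^sup>2\<close> over positive \<open>j\<close> and negative \<open>k\<close> in two ways shows that
  there are as many positive as negative eigenvalues. The positive eigenvectors together with
  their conjugates form the paired basis of (3.1). A map \<open>V\<close> sending this basis to the product
  basis \<open>|\<plusminus>\<rangle> \<otimes> |k\<rangle>\<close> maps an orthonormal basis to an orthonormal basis, hence is unitary, and
  \<open>V L V\<^sup>\<dagger>\<close> and \<open>S\<^sub>y \<otimes> \<Sum>\<^sub>k \<alpha>\<^sub>k \<Pi>\<^sub>k\<close> agree on that product basis.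
\<close>

section \<open>Inner products and adjoints\<close>

lemma dim_mat_adjoint [simp]:
  "dim_row (mat_adjoint A) = dim_col A" "dim_col (mat_adjoint A) = dim_row A"
  unfolding mat_adjoint_def by auto

lemma index_mat_adjoint [simp]:
  assumes "i < dim_col A" "j < dim_row A"
  shows "mat_adjoint A $$ (i, j) = conjugate (A $$ (j, i))"
  using assms unfolding mat_adjoint_def mat_of_rows_def by simp

lemma mat_adjoint_carrier [simp]: "A \<in> carrier_mat n m \<Longrightarrow> mat_adjoint A \<in> carrier_mat m n"
  by (rule carrier_matI) (auto dest: carrier_matD)

lemma mat_adjoint_adjoint [simp]: "mat_adjoint (mat_adjoint (A :: complex mat)) = A"
  by (rule eq_matI) auto

lemma cscalar_prod_sum:
  "(x :: complex vec) \<in> carrier_vec n \<Longrightarrow> y \<in> carrier_vec n \<Longrightarrow>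
    x \<bullet>c y = (\<Sum>i<n. x $ i * cnj (y $ i))"
  by (simp add: scalar_prod_def atLeast0LessThan)

lemma mult_mat_vec_index_sum:
  "A \<in> carrier_mat n m \<Longrightarrow> x \<in> carrier_vec m \<Longrightarrow> i < n \<Longrightarrow>
    (A *\<^sub>v x) $ i = (\<Sum>k<m. A $$ (i, k) * x $ k)"
  by (simp add: scalar_prod_def atLeast0LessThan row_def)

lemma mult_mat_index_sum:
  "A \<in> carrier_mat n m \<Longrightarrow> B \<in> carrier_mat m l \<Longrightarrow> i < n \<Longrightarrow> j < l \<Longrightarrow>
    (A * B) $$ (i, j) = (\<Sum>k<m. A $$ (i, k) * B $$ (k, j))"
  by (simp add: scalar_prod_def atLeast0LessThan)

lemma cnj_cscalar_prod:
  "(x :: complex vec) \<in> carrier_vec n \<Longrightarrow> y \<in> carrier_vec n \<Longrightarrow> cnj (x \<bullet>c y) = y \<bullet>c x"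
  by (simp add: cscalar_prod_sum mult.commute)

lemma cscalar_prod_smult_left:
  "(x :: complex vec) \<in> carrier_vec n \<Longrightarrow> y \<in> carrier_vec n \<Longrightarrow> (a \<cdot>\<^sub>v x) \<bullet>c y = a * (x \<bullet>c y)"
  by (simp add: cscalar_prod_sum sum_distrib_left mult_ac)

lemma cscalar_prod_smult_right:
  "(x :: complex vec) \<in> carrier_vec n \<Longrightarrow> y \<in> carrier_vec n \<Longrightarrow> x \<bullet>c (a \<cdot>\<^sub>v y) = cnj a * (x \<bullet>c y)"
  by (simp add: cscalar_prod_sum sum_distrib_left mult_ac)

lemma cscalar_prod_conjugate:
  "(x :: complex vec) \<in> carrier_vec n \<Longrightarrow> y \<in> carrier_vec n \<Longrightarrow>
    conjugate x \<bullet>c conjugate y = cnj (x \<bullet>c y)"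
  by (auto simp: scalar_prod_def atLeast0LessThan cnj_sum intro!: sum.cong)

lemma mat_adjoint_cscalar_prod:
  assumes A: "A \<in> carrier_mat n m" and x: "(x :: complex vec) \<in> carrier_vec m" and y: "y \<in> carrier_vec n"
  shows "(A *\<^sub>v x) \<bullet>c y = x \<bullet>c (mat_adjoint A *\<^sub>v y)"
proof -
  have "(A *\<^sub>v x) \<bullet>c y = (\<Sum>i<n. (A *\<^sub>v x) $ i * cnj (y $ i))"
    using A x y by (simp add: cscalar_prod_sum[of _ n])
  also have "\<dots> = (\<Sum>i<n. \<Sum>k<m. A $$ (i, k) * x $ k * cnj (y $ i))"
    using A x by (auto simp: row_def scalar_prod_def atLeast0LessThan sum_distrib_right intro!: sum.cong)
  also have "\<dots> = (\<Sum>k<m. \<Sum>i<n. A $$ (i, k) * x $ k * cnj (y $ i))"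
    by (rule sum.swap)
  also have "\<dots> = (\<Sum>k<m. x $ k * cnj ((mat_adjoint A *\<^sub>v y) $ k))"
    using A y by (auto simp: row_def scalar_prod_def atLeast0LessThan sum_distrib_left cnj_sum mult_ac intro!: sum.cong)
  also have "\<dots> = x \<bullet>c (mat_adjoint A *\<^sub>v y)"
    using cscalar_prod_sum[OF x mult_mat_vec_carrier[OF mat_adjoint_carrier[OF A] y]] by simp
  finally show ?thesis .
qed

lemma hermitian_cscalar_prod:
  "A \<in> carrier_mat n n \<Longrightarrow> mat_adjoint A = A \<Longrightarrow> (x :: complex vec) \<in> carrier_vec n \<Longrightarrow>
    y \<in> carrier_vec n \<Longrightarrow> (A *\<^sub>v x) \<bullet>c y = x \<bullet>c (A *\<^sub>v y)"
  using mat_adjoint_cscalar_prod by metis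

lemma isometry_cscalar_prod:
  assumes W: "W \<in> carrier_mat n n" and WW: "mat_adjoint W * W = 1\<^sub>m n"
    and x: "(x :: complex vec) \<in> carrier_vec n" and y: "y \<in> carrier_vec n"
  shows "(W *\<^sub>v x) \<bullet>c (W *\<^sub>v y) = x \<bullet>c y"
proof -
  have "(W *\<^sub>v x) \<bullet>c (W *\<^sub>v y) = x \<bullet>c ((mat_adjoint W * W) *\<^sub>v y)"
    using mat_adjoint_cscalar_prod[OF W x] W y by (simp add: assoc_mult_mat_vec[symmetric, of _ n n _ n])
  then show ?thesis using WW y by simp
qed

lemma mat_adjoint_mult:
  assumes A: "(A :: complex mat) \<in> carrier_mat n m" and B: "B \<in> carrier_mat m l"
  shows "mat_adjoint (A * B) = mat_adjoint B * mat_adjoint A"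
proof (rule eq_matI)
  fix i j assume "i < dim_row (mat_adjoint B * mat_adjoint A)" "j < dim_col (mat_adjoint B * mat_adjoint A)"
  then have i: "i < l" and j: "j < n" using A B by auto
  have "mat_adjoint (A * B) $$ (i, j) = cnj (\<Sum>k<m. A $$ (j, k) * B $$ (k, i))"
    using A B i j by (simp add: mult_mat_index_sum[OF A B j i])
  also have "\<dots> = (mat_adjoint B * mat_adjoint A) $$ (i, j)"
    by (subst mult_mat_index_sum[OF mat_adjoint_carrier[OF B] mat_adjoint_carrier[OF A] i j])
      (use A B i j in \<open>auto simp: cnj_sum mult.commute intro!: sum.cong\<close>)
  finally show "mat_adjoint (A * B) $$ (i, j) = (mat_adjoint B * mat_adjoint A) $$ (i, j)" .
qed (use A B in auto)

lemma index_mat_adjoint_mult: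
  assumes U: "U \<in> carrier_mat n m" and M: "(M :: complex mat) \<in> carrier_mat n l" and i: "i < m" and k: "k < l"
  shows "(mat_adjoint U * M) $$ (i, k) = col M k \<bullet>c col U i"
  using U M i k by (simp add: mult_mat_index_sum[OF mat_adjoint_carrier[OF U] M i k] cscalar_prod_sum[of _ n]
      mult.commute)

section \<open>Orthonormal bases\<close>

lemma orthonormal_fam_carrier: "orthonormal_fam n v I \<Longrightarrow> i \<in> I \<Longrightarrow> v i \<in> carrier_vec n"
  unfolding orthonormal_fam_def by blast

lemma orthonormal_fam_cscalar_prod:
  "orthonormal_fam n v I \<Longrightarrow> i \<in> I \<Longrightarrow> j \<in> I \<Longrightarrow> v j \<bullet>c v i = (if i = j then 1 else 0)"
  unfolding orthonormal_fam_def by blast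

lemma orthonormal_fam_reindex:
  assumes v: "orthonormal_fam n v I" and h: "inj_on h J" "h ` J \<subseteq> I"
  shows "orthonormal_fam n (v \<circ> h) J"
  using v h unfolding orthonormal_fam_def by (auto simp: inj_on_eq_iff image_subset_iff)

lemma orthonormal_fam_conjugate:
  assumes v: "orthonormal_fam n v I"
  shows "orthonormal_fam n (\<lambda>i. conjugate (v i)) I"
  unfolding orthonormal_fam_def
proof (intro conjI ballI)
  fix i j assume i: "i \<in> I" and j: "j \<in> I"
  have "conjugate (v j) \<bullet>c conjugate (v i) = cnj (v j \<bullet>c v i)"
    by (rule cscalar_prod_conjugate[OF orthonormal_fam_carrier[OF v j] orthonormal_fam_carrier[OF v i]])
  then show "conjugate (v j) \<bullet>c conjugate (v i) = (if i = j then 1 else 0)"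
    using orthonormal_fam_cscalar_prod[OF v i j] by simp
qed (use v in \<open>simp add: orthonormal_fam_carrier\<close>)

lemma orthonormal_fam_bool_prod:
  assumes t: "orthonormal_fam n (f True) K" and f: "orthonormal_fam n (f False) K"
    and orth: "\<And>k l. k \<in> K \<Longrightarrow> l \<in> K \<Longrightarrow> f True k \<bullet>c f False l = 0"
  shows "orthonormal_fam n (\<lambda>(i, k). f i k) (UNIV \<times> K)"
  unfolding orthonormal_fam_def
proof (intro conjI ballI)
  fix x assume "x \<in> (UNIV :: bool set) \<times> K"
  then show "(case x of (i, k) \<Rightarrow> f i k) \<in> carrier_vec n"
    using t f by (cases x; cases "fst x") (auto simp: orthonormal_fam_carrier)
next
  fix x y assume x: "x \<in> (UNIV :: bool set) \<times> K" and y: "y \<in> (UNIV :: bool set) \<times> K"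
  then obtain i k i' k' where xy: "x = (i, k)" "y = (i', k')" and kK: "k \<in> K" "k' \<in> K" by auto
  have "f False l \<bullet>c f True k = 0" if "k \<in> K" "l \<in> K" for k l
    using cnj_cscalar_prod[of "f True k" n "f False l"] orth[OF that] t f that
    by (simp add: orthonormal_fam_carrier)
  with orth show "(case y of (i, k) \<Rightarrow> f i k) \<bullet>c (case x of (i, k) \<Rightarrow> f i k) = (if x = y then 1 else 0)"
    using t f kK unfolding xy by (cases i; cases i') (auto simp: orthonormal_fam_cscalar_prod)
qed

lemma orthonormal_fam_unitary:
  assumes u: "orthonormal_fam n u {..<n}"
  shows "unitary_mat n (mat n n (\<lambda>(r, k). u k $ r))"
proof -
  define U where "U = mat n n (\<lambda>(r, k). u k $ r)"
  have U: "U \<in> carrier_mat n n" unfolding U_def by simp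
  have "mat_adjoint U * U = 1\<^sub>m n"
  proof (rule eq_matI)
    fix i j assume "i < dim_row (1\<^sub>m n :: complex mat)" "j < dim_col (1\<^sub>m n :: complex mat)"
    then have i: "i < n" and j: "j < n" by auto
    have "(mat_adjoint U * U) $$ (i, j) = (\<Sum>r<n. u j $ r * cnj (u i $ r))"
      by (subst mult_mat_index_sum[OF mat_adjoint_carrier[OF U] U i j])
        (use i j in \<open>auto simp: U_def mult.commute intro!: sum.cong\<close>)
    also have "\<dots> = u j \<bullet>c u i"
      using cscalar_prod_sum[of "u j" n "u i"] orthonormal_fam_carrier[OF u] i j by simp
    finally show "(mat_adjoint U * U) $$ (i, j) = 1\<^sub>m n $$ (i, j)"
      using u i j by (simp add: orthonormal_fam_cscalar_prod)
  qed (use U in auto)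
  with U show ?thesis
    unfolding unitary_mat_def U_def[symmetric]
    using mat_mult_left_right_inverse[OF mat_adjoint_carrier[OF U] U] by blast
qed

lemma parseval:
  assumes u: "orthonormal_fam n u {..<n}" and x: "x \<in> carrier_vec n"
  shows "(\<Sum>k<n. (x \<bullet>c u k) * cnj (x \<bullet>c u k)) = x \<bullet>c x"
proof -
  define U where "U = mat n n (\<lambda>(r, k). u k $ r)"
  have "unitary_mat n U" unfolding U_def by (rule orthonormal_fam_unitary[OF u])
  then have U: "U \<in> carrier_mat n n" and UU: "U * mat_adjoint U = 1\<^sub>m n"
    unfolding unitary_mat_def by auto
  have coeff: "(mat_adjoint U *\<^sub>v x) $ k = x \<bullet>c u k" if k: "k < n" for k
  proof -
    have "(mat_adjoint U *\<^sub>v x) $ k = (\<Sum>r<n. x $ r * cnj (u k $ r))"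
      by (subst mult_mat_vec_index_sum[OF mat_adjoint_carrier[OF U] x k])
        (use k in \<open>auto simp: U_def mult.commute intro!: sum.cong\<close>)
    then show ?thesis using x u k by (simp add: cscalar_prod_sum orthonormal_fam_carrier)
  qed
  have "(\<Sum>k<n. (x \<bullet>c u k) * cnj (x \<bullet>c u k)) =
      (\<Sum>k<n. (mat_adjoint U *\<^sub>v x) $ k * cnj ((mat_adjoint U *\<^sub>v x) $ k))"
    by (rule sum.cong) (auto simp only: coeff lessThan_iff)
  also have "\<dots> = (mat_adjoint U *\<^sub>v x) \<bullet>c (mat_adjoint U *\<^sub>v x)"
    by (rule cscalar_prod_sum[symmetric]) (use mult_mat_vec_carrier[OF mat_adjoint_carrier[OF U] x] in auto)
  also have "\<dots> = x \<bullet>c x"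
    by (rule isometry_cscalar_prod) (use U UU x in auto)
  finally show ?thesis .
qed

lemma mat_eq_on_orthonormal_basis:
  assumes fin: "finite I" and card: "card I = n" and u: "orthonormal_fam n u I"
    and X: "X \<in> carrier_mat n n" and Y: "Y \<in> carrier_mat n n"
    and eq: "\<And>i. i \<in> I \<Longrightarrow> X *\<^sub>v u i = Y *\<^sub>v u i"
  shows "X = Y"
proof -
  obtain h where h: "bij_betw h {..<n} I"
    using ex_bij_betw_nat_finite[OF fin] card by (auto simp: atLeast0LessThan)
  then have hI: "h k \<in> I" if "k < n" for k
    using that by (auto simp: bij_betw_def)
  have "orthonormal_fam n (u \<circ> h) {..<n}"
    using orthonormal_fam_reindex[OF u] h by (auto simp: bij_betw_def)
  then have "unitary_mat n (mat n n (\<lambda>(r, k). (u \<circ> h) k $ r))" (is "unitary_mat n ?U")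
    by (rule orthonormal_fam_unitary)
  then have U: "?U \<in> carrier_mat n n" and UU: "?U * mat_adjoint ?U = 1\<^sub>m n"
    unfolding unitary_mat_def by auto
  have col: "col ?U k = u (h k)" if "k < n" for k
    using that orthonormal_fam_carrier[OF u hI[OF that]] by (auto intro: eq_vecI)
  have "X * ?U = Y * ?U"
  proof (rule eq_matI)
    fix i j assume "i < dim_row (Y * ?U)" "j < dim_col (Y * ?U)"
    then have i: "i < n" and j: "j < n" using Y U by auto
    have "(X * ?U) $$ (i, j) = (X *\<^sub>v col ?U j) $ i"
      using X U i j by simp
    also have "\<dots> = (X *\<^sub>v u (h j)) $ i" by (simp only: col[OF j])
    also have "\<dots> = (Y *\<^sub>v u (h j)) $ i" by (simp add: eq hI[OF j])
    also have "\<dots> = (Y *\<^sub>v col ?U j) $ i" by (simp only: col[OF j])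
    also have "\<dots> = (Y * ?U) $$ (i, j)"
      using Y U i j by simp
    finally show "(X * ?U) $$ (i, j) = (Y * ?U) $$ (i, j)" .
  qed (use X Y U in auto)
  then have "X * ?U * mat_adjoint ?U = Y * ?U * mat_adjoint ?U" by simp
  then show ?thesis
    using X Y U UU by (simp add: assoc_mult_mat[of _ n n _ n _ n])
qed

lemma card_eq_if_cross_orthogonal:
  assumes u: "orthonormal_fam n u {..<n}" and w: "orthonormal_fam n w {..<n}"
    and P: "P \<subseteq> {..<n}" and Q: "Q \<subseteq> {..<n}"
    and orth: "\<And>j k. j < n \<Longrightarrow> k < n \<Longrightarrow> (j \<in> P) \<noteq> (k \<in> Q) \<Longrightarrow> u j \<bullet>c w k = 0"
  shows "card P = card Q"
proof -
  \<comment> \<open>double counting of \<open>|u j \<bullet>c w k|\<^sup>2\<close> over \<open>P \<times> Q\<close>; rows and columns sum to 1 by Parseval\<close>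
  define t where "t j k = (u j \<bullet>c w k) * cnj (u j \<bullet>c w k)" for j k
  have uc: "\<And>j. j < n \<Longrightarrow> u j \<in> carrier_vec n" and wc: "\<And>k. k < n \<Longrightarrow> w k \<in> carrier_vec n"
    using u w by (auto simp: orthonormal_fam_carrier)
  have row: "(\<Sum>k<n. t j k) = 1" if "j < n" for j
    using parseval[OF w uc[OF that]] orthonormal_fam_cscalar_prod[OF u, of j j] that by (simp add: t_def)
  have col: "(\<Sum>j<n. t j k) = 1" if "k < n" for k
  proof -
    have "t j k = (w k \<bullet>c u j) * cnj (w k \<bullet>c u j)" if "j < n" for j
      unfolding t_def cnj_cscalar_prod[OF wc[OF \<open>k < n\<close>] uc[OF that], symmetric]
      by (simp add: mult.commute)
    then show ?thesis
      using parseval[OF u wc[OF that]] orthonormal_fam_cscalar_prod[OF w, of k k] that by simp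
  qed
  have "of_nat (card P) = (\<Sum>j\<in>P. \<Sum>k<n. t j k)" using P row by (simp add: subset_iff cong: sum.cong)
  also have "\<dots> = (\<Sum>j\<in>P. \<Sum>k\<in>Q. t j k)"
    using P Q orth by (intro sum.cong refl sum.mono_neutral_right) (auto simp: t_def)
  also have "\<dots> = (\<Sum>k\<in>Q. \<Sum>j\<in>P. t j k)" by (rule sum.swap)
  also have "\<dots> = (\<Sum>k\<in>Q. \<Sum>j<n. t j k)"
    using P Q orth by (intro sum.cong refl sum.mono_neutral_left) (auto simp: t_def)
  also have "\<dots> = of_nat (card Q)" using Q col by (simp add: subset_iff cong: sum.cong)
  finally show ?thesis by (simp only: of_nat_eq_iff)
qed

definition outer_sum :: "nat \<Rightarrow> 'i set \<Rightarrow> ('i \<Rightarrow> complex vec) \<Rightarrow> ('i \<Rightarrow> complex vec) \<Rightarrow> complex mat"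
  where "outer_sum n I g h = mat n n (\<lambda>(r, c). \<Sum>i\<in>I. g i $ r * cnj (h i $ c))"

lemma outer_sum_carrier [simp]: "outer_sum n I g h \<in> carrier_mat n n"
  unfolding outer_sum_def by simp

lemma mat_adjoint_outer_sum: "mat_adjoint (outer_sum n I g h) = outer_sum n I h g"
  by (rule eq_matI) (auto simp: outer_sum_def mult.commute)

lemma outer_sum_mult_orthonormal:
  assumes fin: "finite I" and h: "orthonormal_fam n h I" and g: "\<And>i. i \<in> I \<Longrightarrow> g i \<in> carrier_vec n"
    and j: "j \<in> I"
  shows "outer_sum n I g h *\<^sub>v h j = g j"
proof (rule eq_vecI)
  fix r assume "r < dim_vec (g j)"
  then have r: "r < n" using g[OF j] by simp
  have hj: "h j \<in> carrier_vec n" by (rule orthonormal_fam_carrier[OF h j])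
  have "(outer_sum n I g h *\<^sub>v h j) $ r = (\<Sum>c<n. \<Sum>i\<in>I. g i $ r * (h j $ c * cnj (h i $ c)))"
    by (subst mult_mat_vec_index_sum[OF outer_sum_carrier hj r])
      (use r in \<open>auto simp: outer_sum_def sum_distrib_left mult_ac intro!: sum.cong\<close>)
  also have "\<dots> = (\<Sum>i\<in>I. g i $ r * (h j \<bullet>c h i))"
    by (subst sum.swap) (use h hj in \<open>auto simp: cscalar_prod_sum orthonormal_fam_carrier
        sum_distrib_left intro!: sum.cong\<close>)
  also have "\<dots> = (\<Sum>i\<in>I. if i = j then g j $ r else 0)"
    by (rule sum.cong) (use h j in \<open>auto simp: orthonormal_fam_cscalar_prod\<close>)
  also have "\<dots> = g j $ r" using fin j by simp
  finally show "(outer_sum n I g h *\<^sub>v h j) $ r = g j $ r" .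
qed (use g[OF j] in \<open>simp add: outer_sum_def\<close>)

lemma unitary_if_maps_orthonormal_basis:
  assumes fin: "finite I" and card: "card I = n"
    and u: "orthonormal_fam n u I" and f: "orthonormal_fam n f I"
    and V: "V \<in> carrier_mat n n" and Vu: "\<And>i. i \<in> I \<Longrightarrow> V *\<^sub>v u i = f i"
  shows "unitary_mat n V"
proof -
  have uc: "\<And>i. i \<in> I \<Longrightarrow> u i \<in> carrier_vec n" and fc: "\<And>i. i \<in> I \<Longrightarrow> f i \<in> carrier_vec n"
    using u f by (auto simp: orthonormal_fam_carrier)
  have "V = outer_sum n I f u"
    by (rule mat_eq_on_orthonormal_basis[OF fin card u V outer_sum_carrier])
      (simp add: Vu outer_sum_mult_orthonormal[OF fin u fc])
  then have Vf: "mat_adjoint V *\<^sub>v f i = u i" if "i \<in> I" for i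
    using outer_sum_mult_orthonormal[OF fin f uc that] by (simp add: mat_adjoint_outer_sum)
  have VH: "mat_adjoint V \<in> carrier_mat n n" using V by simp
  have "mat_adjoint V * V = 1\<^sub>m n"
    by (rule mat_eq_on_orthonormal_basis[OF fin card u])
      (use V uc Vu Vf in \<open>auto simp: assoc_mult_mat_vec[of _ n n _ n]\<close>)
  moreover have "V * mat_adjoint V = 1\<^sub>m n"
    by (rule mat_eq_on_orthonormal_basis[OF fin card f])
      (use V fc Vu Vf in \<open>auto simp: assoc_mult_mat_vec[of _ n n _ n]\<close>)
  ultimately show ?thesis unfolding unitary_mat_def using V by blast
qed

lemma unitary_conj_eq_of_eigenbases:
  assumes fin: "finite I" and card: "card I = n"
    and u: "orthonormal_fam n u I" and f: "orthonormal_fam n f I"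
    and V: "unitary_mat n V" and Vu: "\<And>i. i \<in> I \<Longrightarrow> V *\<^sub>v u i = f i"
    and L: "L \<in> carrier_mat n n" and K: "K \<in> carrier_mat n n"
    and Lu: "\<And>i. i \<in> I \<Longrightarrow> L *\<^sub>v u i = c i \<cdot>\<^sub>v u i"
    and Kf: "\<And>i. i \<in> I \<Longrightarrow> K *\<^sub>v f i = c i \<cdot>\<^sub>v f i"
  shows "V * L * mat_adjoint V = K"
proof (rule mat_eq_on_orthonormal_basis[OF fin card f _ K])
  have Vc: "V \<in> carrier_mat n n" and VV: "mat_adjoint V * V = 1\<^sub>m n"
    using V unfolding unitary_mat_def by auto
  show "V * L * mat_adjoint V \<in> carrier_mat n n"
    using Vc L by (meson mult_carrier_mat mat_adjoint_carrier)
  fix i assume i: "i \<in> I"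
  have ui: "u i \<in> carrier_vec n" by (rule orthonormal_fam_carrier[OF u i])
  have "mat_adjoint V *\<^sub>v f i = (mat_adjoint V * V) *\<^sub>v u i"
    using Vc ui by (simp add: Vu[OF i, symmetric] assoc_mult_mat_vec[of _ n n _ n])
  also have "\<dots> = u i" using VV ui by simp
  finally have Vf: "mat_adjoint V *\<^sub>v f i = u i" .
  have "(V * L * mat_adjoint V) *\<^sub>v f i = V *\<^sub>v (L *\<^sub>v (mat_adjoint V *\<^sub>v f i))"
    using Vc L orthonormal_fam_carrier[OF f i]
    by (simp add: assoc_mult_mat_vec[of _ n n _ n] mult_mat_vec_carrier[of _ n n])
  also have "\<dots> = c i \<cdot>\<^sub>v f i"
    using Vc ui by (simp add: Vf Lu[OF i] mult_mat_vec Vu[OF i])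
  finally show "(V * L * mat_adjoint V) *\<^sub>v f i = K *\<^sub>v f i" by (simp add: Kf[OF i])
qed

section \<open>Kronecker products\<close>

lemma mult_add_less_mult: "i < a \<Longrightarrow> j < b \<Longrightarrow> i * b + j < a * (b :: nat)"
proof -
  assume "i < a" "j < b"
  then have "i * b + j < Suc i * b" by simp
  also have "\<dots> \<le> a * b" using \<open>i < a\<close> by (intro mult_le_mono1) simp
  finally show ?thesis .
qed

lemma sum_lessThan_mult:
  fixes g :: "nat \<Rightarrow> 'a :: comm_monoid_add"
  shows "(\<Sum>r<a * b. g r) = (\<Sum>i<a. \<Sum>j<b. g (i * b + j))"
proof -
  have "(\<Sum>j<b. g (i * b + j)) = sum g {i * b..<i * b + b}" for i
    using sum.shift_bounds_nat_ivl[of g 0 "i * b" b] by (simp add: atLeast0LessThan add.commute)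
  then show ?thesis by (simp add: sum.nat_group)
qed

lemma kron_vec_carrier: "u \<in> carrier_vec a \<Longrightarrow> w \<in> carrier_vec b \<Longrightarrow> kron_vec u w \<in> carrier_vec (a * b)"
  unfolding kron_vec_def by (auto dest: carrier_vecD)

lemma index_kron_vec:
  "u \<in> carrier_vec a \<Longrightarrow> w \<in> carrier_vec b \<Longrightarrow> i < a \<Longrightarrow> j < b \<Longrightarrow>
    kron_vec u w $ (i * b + j) = u $ i * w $ j"
  unfolding kron_vec_def using mult_add_less_mult[of i a j b] by (auto dest!: carrier_vecD)

lemma kron_vec_smult: "kron_vec (c \<cdot>\<^sub>v u) (d \<cdot>\<^sub>v w) = (c * d) \<cdot>\<^sub>v kron_vec u w"
proof (rule eq_vecI)
  fix r assume "r < dim_vec ((c * d) \<cdot>\<^sub>v kron_vec u w)"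
  then have r: "r < dim_vec u * dim_vec w" by (simp add: kron_vec_def)
  then have "0 < dim_vec w" by (cases "dim_vec w") auto
  with r have "r div dim_vec w < dim_vec u" "r mod dim_vec w < dim_vec w"
    by (auto simp: less_mult_imp_div_less)
  with r show "kron_vec (c \<cdot>\<^sub>v u) (d \<cdot>\<^sub>v w) $ r = ((c * d) \<cdot>\<^sub>v kron_vec u w) $ r"
    by (simp add: kron_vec_def mult_ac)
qed (simp add: kron_vec_def)

lemma cscalar_prod_kron_vec:
  assumes u: "(u :: complex vec) \<in> carrier_vec a" and u': "u' \<in> carrier_vec a"
    and w: "w \<in> carrier_vec b" and w': "w' \<in> carrier_vec b"
  shows "kron_vec u w \<bullet>c kron_vec u' w' = (u \<bullet>c u') * (w \<bullet>c w')"
proof -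
  have "kron_vec u w \<bullet>c kron_vec u' w' =
      (\<Sum>i<a. \<Sum>j<b. kron_vec u w $ (i * b + j) * cnj (kron_vec u' w' $ (i * b + j)))"
    by (simp add: cscalar_prod_sum[OF kron_vec_carrier[OF u w] kron_vec_carrier[OF u' w']]
        sum_lessThan_mult)
  also have "\<dots> = (\<Sum>i<a. \<Sum>j<b. (u $ i * cnj (u' $ i)) * (w $ j * cnj (w' $ j)))"
    by (intro sum.cong refl) (simp add: index_kron_vec[OF u w] index_kron_vec[OF u' w'] mult_ac)
  also have "\<dots> = (u \<bullet>c u') * (w \<bullet>c w')"
    using u u' w w' by (simp add: cscalar_prod_sum sum_product)
  finally show ?thesis .
qed

lemma orthonormal_fam_kron:
  assumes e: "orthonormal_fam a e I" and f: "orthonormal_fam b f J"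
  shows "orthonormal_fam (a * b) (\<lambda>(i, k). kron_vec (e i) (f k)) (I \<times> J)"
  unfolding orthonormal_fam_def
proof (intro conjI ballI)
  fix x assume "x \<in> I \<times> J"
  then show "(case x of (i, k) \<Rightarrow> kron_vec (e i) (f k)) \<in> carrier_vec (a * b)"
    using e f by (auto simp: kron_vec_carrier orthonormal_fam_carrier)
next
  fix x y assume "x \<in> I \<times> J" "y \<in> I \<times> J"
  then obtain i k i' k' where xy: "x = (i, k)" "y = (i', k')" and "i \<in> I" "k \<in> J" "i' \<in> I" "k' \<in> J"
    by auto
  then show "(case y of (i, k) \<Rightarrow> kron_vec (e i) (f k)) \<bullet>c (case x of (i, k) \<Rightarrow> kron_vec (e i) (f k)) =
      (if x = y then 1 else 0)"
    using cscalar_prod_kron_vec[of "e i'" a "e i" "f k'" b "f k"] e f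
    by (auto simp: orthonormal_fam_carrier orthonormal_fam_cscalar_prod)
qed

lemma kron_mat_carrier:
  "A \<in> carrier_mat a a \<Longrightarrow> B \<in> carrier_mat b b \<Longrightarrow> kron_mat A B \<in> carrier_mat (a * b) (a * b)"
  unfolding kron_mat_def by (auto dest: carrier_matD)

lemma index_kron_mat:
  "A \<in> carrier_mat a a \<Longrightarrow> B \<in> carrier_mat b b \<Longrightarrow> i < a \<Longrightarrow> j < b \<Longrightarrow> k < a \<Longrightarrow> l < b \<Longrightarrow>
    kron_mat A B $$ (i * b + j, k * b + l) = A $$ (i, k) * B $$ (j, l)"
  unfolding kron_mat_def using mult_add_less_mult[of i a j b] mult_add_less_mult[of k a l b]
  by (auto dest!: carrier_matD)

lemma kron_mat_mult_kron_vec: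
  assumes A: "A \<in> carrier_mat a a" and B: "B \<in> carrier_mat b b"
    and u: "(u :: complex vec) \<in> carrier_vec a" and w: "w \<in> carrier_vec b"
  shows "kron_mat A B *\<^sub>v kron_vec u w = kron_vec (A *\<^sub>v u) (B *\<^sub>v w)"
proof (rule eq_vecI)
  have Au: "A *\<^sub>v u \<in> carrier_vec a" and Bw: "B *\<^sub>v w \<in> carrier_vec b" using A B u w by auto
  show "dim_vec (kron_mat A B *\<^sub>v kron_vec u w) = dim_vec (kron_vec (A *\<^sub>v u) (B *\<^sub>v w))"
    using kron_mat_carrier[OF A B] kron_vec_carrier[OF Au Bw] by auto
  fix r assume "r < dim_vec (kron_vec (A *\<^sub>v u) (B *\<^sub>v w))"
  then have r: "r < a * b" using kron_vec_carrier[OF Au Bw] by auto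
  then have "0 < b" by (cases b) auto
  define i j where "i = r div b" and "j = r mod b"
  have i: "i < a" and j: "j < b" and rij: "r = i * b + j"
    using r \<open>0 < b\<close> by (auto simp: i_def j_def less_mult_imp_div_less)
  have "(kron_mat A B *\<^sub>v kron_vec u w) $ r =
      (\<Sum>k<a. \<Sum>l<b. kron_mat A B $$ (r, k * b + l) * kron_vec u w $ (k * b + l))"
    by (simp add: mult_mat_vec_index_sum[OF kron_mat_carrier[OF A B] kron_vec_carrier[OF u w] r]
        sum_lessThan_mult)
  also have "\<dots> = (\<Sum>k<a. \<Sum>l<b. (A $$ (i, k) * u $ k) * (B $$ (j, l) * w $ l))"
  proof (intro sum.cong refl)
    fix k l assume "k \<in> {..<a}" "l \<in> {..<b}"
    then show "kron_mat A B $$ (r, k * b + l) * kron_vec u w $ (k * b + l) =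
        (A $$ (i, k) * u $ k) * (B $$ (j, l) * w $ l)"
      using index_kron_mat[OF A B i j, of k l] index_kron_vec[OF u w, of k l] rij by simp
  qed
  also have "\<dots> = (A *\<^sub>v u) $ i * (B *\<^sub>v w) $ j"
    by (simp add: sum_product mult_mat_vec_index_sum[OF A u i] mult_mat_vec_index_sum[OF B w j])
  also have "\<dots> = kron_vec (A *\<^sub>v u) (B *\<^sub>v w) $ r"
    unfolding rij by (rule index_kron_vec[OF Au Bw i j, symmetric])
  finally show "(kron_mat A B *\<^sub>v kron_vec u w) $ r = kron_vec (A *\<^sub>v u) (B *\<^sub>v w) $ r" .
qed

section \<open>Spectral theorem for Hermitian matrices\<close>

lemma exists_normalizing_scalar:
  assumes x: "(x :: complex vec) \<in> carrier_vec n" and x0: "x \<noteq> 0\<^sub>v n"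
  shows "\<exists>c. (c \<cdot>\<^sub>v x) \<bullet>c (c \<cdot>\<^sub>v x) = 1"
proof -
  have "x \<bullet>c x > 0" using x x0 by simp
  then obtain r where r: "x \<bullet>c x = of_real r" "r > 0"
    by (metis complex_eq_iff less_complex_def Im_complex_of_real Re_complex_of_real zero_complex.simps)
  define c where "c = complex_of_real (1 / sqrt r)"
  have "(c \<cdot>\<^sub>v x) \<bullet>c (c \<cdot>\<^sub>v x) = c * cnj c * (x \<bullet>c x)"
    using x by (simp add: cscalar_prod_smult_left cscalar_prod_smult_right)
  also have "\<dots> = of_real (1 / sqrt r * (1 / sqrt r) * r)" by (simp only: c_def r(1) complex_cnj_complex_of_real of_real_mult)
  also have "1 / sqrt r * (1 / sqrt r) * r = 1" using r(2) by (simp add: divide_simps)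
  finally show ?thesis by (intro exI[of _ c]) simp
qed

lemma orthonormal_basis_from_vector:
  assumes v: "(v :: complex vec) \<in> carrier_vec n" and v0: "v \<noteq> 0\<^sub>v n"
  shows "\<exists>w c. orthonormal_fam n w {..<n} \<and> w 0 = c \<cdot>\<^sub>v v"
proof -
  interpret cof_vec_space n "TYPE(complex)" .
  define b where "b = basis_completion v"
  have b: "set b \<subseteq> carrier_vec n" "distinct b" "\<not> lin_dep (set b)" "length b = n" "hd b = v"
    using basis_completion[OF v v0] unfolding b_def by auto
  have "n > 0" using v v0 by (cases n) auto
  then obtain bs where b_Cons: "b = v # bs" using b(4,5) by (cases b) auto
  define ws where "ws = gram_schmidt n b"
  have ws: "corthogonal ws" "set ws \<subseteq> carrier_vec n" "length ws = n"
    using gram_schmidt_result[OF b(1,2,3) ws_def] b(4) by auto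
  have ws0: "ws ! 0 = v"
    using gram_schmidt_hd[OF v, of bs] ws(3) \<open>n > 0\<close> unfolding ws_def b_Cons by (cases "gram_schmidt n (v # bs)") auto
  have wsc: "ws ! k \<in> carrier_vec n" if "k < n" for k using ws that by auto
  have "\<exists>c. (c \<cdot>\<^sub>v ws ! k) \<bullet>c (c \<cdot>\<^sub>v ws ! k) = 1" if k: "k < n" for k
  proof (rule exists_normalizing_scalar[OF wsc[OF k]])
    show "ws ! k \<noteq> 0\<^sub>v n" using corthogonalD[OF ws(1), of k k] k ws(3) by auto
  qed
  then obtain c where c: "\<And>k. k < n \<Longrightarrow> (c k \<cdot>\<^sub>v ws ! k) \<bullet>c (c k \<cdot>\<^sub>v ws ! k) = 1" by metis
  define w where "w k = c k \<cdot>\<^sub>v ws ! k" for k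
  have "orthonormal_fam n w {..<n}"
    unfolding orthonormal_fam_def
  proof (intro conjI ballI)
    fix i j assume i: "i \<in> {..<n}" and j: "j \<in> {..<n}"
    have "w j \<bullet>c w i = c j * cnj (c i) * (ws ! j \<bullet>c ws ! i)"
      using wsc i j by (simp add: w_def cscalar_prod_smult_left[of _ n] cscalar_prod_smult_right[of _ n])
    then show "w j \<bullet>c w i = (if i = j then 1 else 0)"
      using c[of i] corthogonalD[OF ws(1), of j i] i j ws(3) by (auto simp: w_def)
  qed (auto simp: w_def wsc)
  moreover have "w 0 = c 0 \<cdot>\<^sub>v v" by (simp add: w_def ws0)
  ultimately show ?thesis by blast
qed

lemma unitary_conj_eigenvector:
  assumes W: "unitary_mat n W" and A: "A \<in> carrier_mat n n" and x: "x \<in> carrier_vec n"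
    and ev: "(mat_adjoint W * A * W) *\<^sub>v x = d \<cdot>\<^sub>v x"
  shows "A *\<^sub>v (W *\<^sub>v x) = d \<cdot>\<^sub>v (W *\<^sub>v x)"
proof -
  define B where "B = mat_adjoint W * A * W"
  have Wc: "W \<in> carrier_mat n n" and WW: "W * mat_adjoint W = 1\<^sub>m n"
    using W unfolding unitary_mat_def by auto
  have B: "B \<in> carrier_mat n n"
    unfolding B_def by (rule mult_carrier_mat[OF mult_carrier_mat[OF mat_adjoint_carrier[OF Wc] A] Wc])
  have "W * B = (W * mat_adjoint W) * (A * W)"
    unfolding B_def using Wc A mat_adjoint_carrier[OF Wc] by (simp add: assoc_mult_mat[of _ n n _ n _ n])
  then have WB: "W * B = A * W" using WW Wc A by simp
  have "A *\<^sub>v (W *\<^sub>v x) = (W * B) *\<^sub>v x" using Wc A x by (simp add: WB)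
  also have "\<dots> = W *\<^sub>v (d \<cdot>\<^sub>v x)" using Wc B x ev by (simp add: B_def[symmetric])
  also have "\<dots> = d \<cdot>\<^sub>v (W *\<^sub>v x)" by (rule mult_mat_vec[OF Wc x])
  finally show ?thesis .
qed

lemma unit_vec_0_eigenvector:
  fixes B :: "complex mat"
  assumes B: "B \<in> carrier_mat (Suc m) (Suc m)"
    and col0: "\<And>i. 0 < i \<Longrightarrow> i < Suc m \<Longrightarrow> B $$ (i, 0) = 0"
  shows "B *\<^sub>v unit_vec (Suc m) 0 = B $$ (0, 0) \<cdot>\<^sub>v unit_vec (Suc m) 0"
proof (rule eq_vecI)
  fix i assume "i < dim_vec (B $$ (0, 0) \<cdot>\<^sub>v unit_vec (Suc m) 0)"
  then have i: "i < Suc m" by simp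
  then have "(B *\<^sub>v unit_vec (Suc m) 0) $ i = B $$ (i, 0)" using B by simp
  then show "(B *\<^sub>v unit_vec (Suc m) 0) $ i = (B $$ (0, 0) \<cdot>\<^sub>v unit_vec (Suc m) 0) $ i"
    using i col0[of i] by (cases i) auto
qed (use B in simp)

lemma vCons_0_eigenvector:
  fixes B :: "complex mat"
  assumes B: "B \<in> carrier_mat (Suc m) (Suc m)"
    and row0: "\<And>k. k < m \<Longrightarrow> B $$ (0, Suc k) = 0"
    and y: "y \<in> carrier_vec m"
    and ev: "mat m m (\<lambda>(i, k). B $$ (Suc i, Suc k)) *\<^sub>v y = d \<cdot>\<^sub>v y"
  shows "B *\<^sub>v vCons 0 y = d \<cdot>\<^sub>v vCons 0 y"
proof (rule eq_vecI)
  fix i assume "i < dim_vec (d \<cdot>\<^sub>v vCons 0 y)"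
  then have i: "i < Suc m" using y by simp
  have y0: "vCons 0 y \<in> carrier_vec (Suc m)" using y by simp
  have "(B *\<^sub>v vCons 0 y) $ i = (\<Sum>k<m. B $$ (i, Suc k) * y $ k)"
    unfolding mult_mat_vec_index_sum[OF B y0 i] sum.lessThan_Suc_shift by simp
  also have "\<dots> = (d \<cdot>\<^sub>v vCons 0 y) $ i"
  proof (cases i)
    case 0
    then show ?thesis using row0 by simp
  next
    case (Suc i')
    then have i': "i' < m" using i by simp
    have "(mat m m (\<lambda>(i, k). B $$ (Suc i, Suc k)) *\<^sub>v y) $ i' = (\<Sum>k<m. B $$ (i, Suc k) * y $ k)"
      by (subst mult_mat_vec_index_sum[OF _ y i']) (auto simp: Suc i')
    then show ?thesis using Suc i' y ev by simp
  qed
  finally show "(B *\<^sub>v vCons 0 y) $ i = (d \<cdot>\<^sub>v vCons 0 y) $ i" .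
qed (use B y in simp)

lemma orthonormal_fam_unit_vec_0_vCons:
  assumes ys: "orthonormal_fam m ys {..<m}"
  shows "orthonormal_fam (Suc m) (\<lambda>j. if j = 0 then unit_vec (Suc m) 0 else vCons 0 (ys (j - 1))) {..<Suc m}"
proof -
  have unit0: "unit_vec (Suc m) 0 = vCons (1 :: complex) (0\<^sub>v m)"
    by (rule eq_vecI) (auto simp: vec_index_vCons)
  have ysc: "\<And>j. j < m \<Longrightarrow> ys j \<in> carrier_vec m" using ys by (simp add: orthonormal_fam_carrier)
  show ?thesis
    unfolding orthonormal_fam_def
  proof (intro conjI ballI)
    fix j assume "j \<in> {..<Suc m}"
    then show "(if j = 0 then unit_vec (Suc m) 0 else vCons 0 (ys (j - 1))) \<in> carrier_vec (Suc m)"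
      using ysc[of "j - 1"] by auto
  next
    fix i j assume i: "i \<in> {..<Suc m}" and j: "j \<in> {..<Suc m}"
    show "(if j = 0 then unit_vec (Suc m) 0 else vCons 0 (ys (j - 1))) \<bullet>c
        (if i = 0 then unit_vec (Suc m) 0 else vCons 0 (ys (i - 1))) = (if i = j then 1 else 0)"
      using i j ysc[of "i - 1"] ysc[of "j - 1"] orthonormal_fam_cscalar_prod[OF ys, of "i - 1" "j - 1"]
      by (cases i; cases j) (auto simp: unit0)
  qed
qed

lemma hermitian_deflation:
  fixes A :: "complex mat"
  assumes A: "A \<in> carrier_mat n n" and herm: "mat_adjoint A = A"
    and w: "orthonormal_fam n w {..<n}" and Aw0: "A *\<^sub>v w 0 = e \<cdot>\<^sub>v w 0"
    and W: "W = mat n n (\<lambda>(r, k). w k $ r)"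
  shows "mat_adjoint (mat_adjoint W * A * W) = mat_adjoint W * A * W"
    and "\<And>i. 0 < i \<Longrightarrow> i < n \<Longrightarrow> (mat_adjoint W * A * W) $$ (i, 0) = 0"
proof -
  have wc: "\<And>k. k < n \<Longrightarrow> w k \<in> carrier_vec n" using w by (simp add: orthonormal_fam_carrier)
  have Wc: "W \<in> carrier_mat n n" by (simp add: W)
  have "mat_adjoint (mat_adjoint W * A * W) = mat_adjoint (A * W) * W"
    unfolding assoc_mult_mat[OF mat_adjoint_carrier[OF Wc] A Wc]
    by (simp add: mat_adjoint_mult[OF mat_adjoint_carrier[OF Wc] mult_carrier_mat[OF A Wc]])
  then show "mat_adjoint (mat_adjoint W * A * W) = mat_adjoint W * A * W"
    by (simp add: mat_adjoint_mult[OF A Wc] herm)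
  fix i assume i: "0 < i" "i < n"
  then have col: "col W i = w i" "col W 0 = w 0" using wc[of i] wc[of 0] by (auto simp: W intro: eq_vecI)
  have "(mat_adjoint W * A * W) $$ (i, 0) = (A *\<^sub>v w 0) \<bullet>c w i"
    unfolding assoc_mult_mat[OF mat_adjoint_carrier[OF Wc] A Wc]
      index_mat_adjoint_mult[OF Wc mult_carrier_mat[OF A Wc] \<open>i < n\<close> order.strict_trans[OF i]]
      col_mult2[OF A Wc order.strict_trans[OF i]] col ..
  also have "\<dots> = 0"
    using i Aw0 orthonormal_fam_cscalar_prod[OF w, of i 0] by (simp add: cscalar_prod_smult_left[OF wc wc])
  finally show "(mat_adjoint W * A * W) $$ (i, 0) = 0" .
qed

lemma hermitian_lower_block:
  assumes B: "(B :: complex mat) \<in> carrier_mat (Suc m) (Suc m)" and herm: "mat_adjoint B = B"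
  shows "mat_adjoint (mat m m (\<lambda>(i, k). B $$ (Suc i, Suc k))) = mat m m (\<lambda>(i, k). B $$ (Suc i, Suc k))"
proof (rule eq_matI)
  fix i k assume "i < dim_row (mat m m (\<lambda>(i, k). B $$ (Suc i, Suc k)))"
    "k < dim_col (mat m m (\<lambda>(i, k). B $$ (Suc i, Suc k)))"
  then show "mat_adjoint (mat m m (\<lambda>(i, k). B $$ (Suc i, Suc k))) $$ (i, k) =
      mat m m (\<lambda>(i, k). B $$ (Suc i, Suc k)) $$ (i, k)"
    using B arg_cong[OF herm, of "\<lambda>M. M $$ (Suc i, Suc k)"] by simp
qed simp_all

lemma eigenbasis_from_lower_block:
  fixes B :: "complex mat"
  assumes B: "B \<in> carrier_mat (Suc m) (Suc m)" and herm: "mat_adjoint B = B"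
    and col0: "\<And>i. 0 < i \<Longrightarrow> i < Suc m \<Longrightarrow> B $$ (i, 0) = 0"
    and ys: "orthonormal_fam m ys {..<m}"
    and ev: "\<forall>j<m. mat m m (\<lambda>(i, k). B $$ (Suc i, Suc k)) *\<^sub>v ys j = d j \<cdot>\<^sub>v ys j"
  shows "\<exists>xs d'. orthonormal_fam (Suc m) xs {..<Suc m} \<and> (\<forall>j<Suc m. B *\<^sub>v xs j = d' j \<cdot>\<^sub>v xs j)"
proof -
  have row0: "B $$ (0, Suc k) = 0" if "k < m" for k
    using that col0[of "Suc k"] B arg_cong[OF herm, of "\<lambda>M. M $$ (0, Suc k)"] by simp
  define xs where "xs j = (if j = 0 then unit_vec (Suc m) 0 else vCons 0 (ys (j - 1)))" for j
  define d' where "d' j = (if j = 0 then B $$ (0, 0) else d (j - 1))" for j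
  have "orthonormal_fam (Suc m) xs {..<Suc m}"
    unfolding xs_def by (rule orthonormal_fam_unit_vec_0_vCons[OF ys])
  moreover have "B *\<^sub>v xs j = d' j \<cdot>\<^sub>v xs j" if "j < Suc m" for j
    using that unit_vec_0_eigenvector[OF B col0] vCons_0_eigenvector[OF B row0] ev ys
    by (auto simp: xs_def d'_def orthonormal_fam_carrier)
  ultimately show ?thesis by blast
qed

lemma eigenbasis_unitary_conj:
  assumes W: "unitary_mat n W" and A: "A \<in> carrier_mat n n"
    and xs: "orthonormal_fam n xs {..<n}"
    and ev: "\<forall>j<n. (mat_adjoint W * A * W) *\<^sub>v xs j = d j \<cdot>\<^sub>v xs j"
  shows "\<exists>vs. orthonormal_fam n vs {..<n} \<and> (\<forall>j<n. A *\<^sub>v vs j = d j \<cdot>\<^sub>v vs j)"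
proof -
  have xsc: "\<And>j. j < n \<Longrightarrow> xs j \<in> carrier_vec n" using xs by (simp add: orthonormal_fam_carrier)
  have "orthonormal_fam n (\<lambda>j. W *\<^sub>v xs j) {..<n}"
    using xs W xsc by (auto simp: orthonormal_fam_def unitary_mat_def isometry_cscalar_prod[of W n])
  moreover have "\<forall>j<n. A *\<^sub>v (W *\<^sub>v xs j) = d j \<cdot>\<^sub>v (W *\<^sub>v xs j)"
    using unitary_conj_eigenvector[OF W A xsc] ev by simp
  ultimately show ?thesis by blast
qed

theorem hermitian_orthonormal_eigenbasis:
  assumes "A \<in> carrier_mat n n" and "mat_adjoint A = A"
  shows "\<exists>v d. orthonormal_fam n v {..<n} \<and> (\<forall>j<n. A *\<^sub>v v j = d j \<cdot>\<^sub>v v j)"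
  using assms
proof (induction n arbitrary: A)
  case 0
  then show ?case by (auto simp: orthonormal_fam_def)
next
  case (Suc m)
  then have A: "A \<in> carrier_mat (Suc m) (Suc m)" and herm: "mat_adjoint A = A" by auto
  obtain e v where v: "v \<in> carrier_vec (Suc m)" "v \<noteq> 0\<^sub>v (Suc m)" and Av: "A *\<^sub>v v = e \<cdot>\<^sub>v v"
    using spectrum_non_empty[OF A] A unfolding spectrum_def eigenvalue_def eigenvector_def by auto
  obtain w c where w: "orthonormal_fam (Suc m) w {..<Suc m}" and w0: "w 0 = c \<cdot>\<^sub>v v"
    using orthonormal_basis_from_vector[OF v] by blast
  have Aw0: "A *\<^sub>v w 0 = e \<cdot>\<^sub>v w 0"
    using A v(1) Av by (simp add: w0 mult_mat_vec smult_smult_assoc mult.commute)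
  define W where "W = mat (Suc m) (Suc m) (\<lambda>(r, k). w k $ r)"
  have W: "unitary_mat (Suc m) W" unfolding W_def by (rule orthonormal_fam_unitary[OF w])
  define B where "B = mat_adjoint W * A * W"
  have Wc: "W \<in> carrier_mat (Suc m) (Suc m)" by (simp add: W_def)
  have B: "B \<in> carrier_mat (Suc m) (Suc m)"
    unfolding B_def by (rule mult_carrier_mat[OF mult_carrier_mat[OF mat_adjoint_carrier[OF Wc] A] Wc])
  note deflation = hermitian_deflation[OF A herm w Aw0 W_def, folded B_def]
  obtain ys d where "orthonormal_fam m ys {..<m}"
    and "\<forall>j<m. mat m m (\<lambda>(i, k). B $$ (Suc i, Suc k)) *\<^sub>v ys j = d j \<cdot>\<^sub>v ys j"
    using Suc.IH[OF _ hermitian_lower_block[OF B deflation(1)]] by auto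
  then obtain xs d' where "orthonormal_fam (Suc m) xs {..<Suc m}"
    and "\<forall>j<Suc m. (mat_adjoint W * A * W) *\<^sub>v xs j = d' j \<cdot>\<^sub>v xs j"
    using eigenbasis_from_lower_block[OF B deflation] unfolding B_def by blast
  then show ?case using eigenbasis_unitary_conj[OF W A] by blast
qed

section \<open>Hermitian matrices with imaginary entries\<close>

lemma invertible_mat_mult_vec_eq_0:
  assumes inv: "invertible_mat L" and L: "L \<in> carrier_mat n n"
    and v: "v \<in> carrier_vec n" and Lv: "L *\<^sub>v v = 0\<^sub>v n"
  shows "v = 0\<^sub>v n"
proof -
  obtain B where LB: "L * B = 1\<^sub>m n" and BL: "B * L = 1\<^sub>m (dim_row B)"
    using inv L unfolding invertible_mat_def inverts_mat_def by auto
  have B: "B \<in> carrier_mat n n"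
    using arg_cong[OF LB, of dim_col] arg_cong[OF BL, of dim_col] L by auto
  have "v = (B * L) *\<^sub>v v" using BL B v by simp
  also have "\<dots> = B *\<^sub>v 0\<^sub>v n" using B L v Lv by simp
  also have "\<dots> = 0\<^sub>v n" using B by (intro eq_vecI) auto
  finally show ?thesis .
qed

lemma hermitian_eigenvalue_real:
  fixes A :: "complex mat"
  assumes A: "A \<in> carrier_mat n n" and herm: "mat_adjoint A = A"
    and v: "v \<in> carrier_vec n" "v \<noteq> 0\<^sub>v n" and ev: "A *\<^sub>v v = d \<cdot>\<^sub>v v"
  shows "d \<in> \<real>"
proof -
  have "d * (v \<bullet>c v) = (A *\<^sub>v v) \<bullet>c v" using v by (simp add: ev cscalar_prod_smult_left)
  also have "\<dots> = v \<bullet>c (A *\<^sub>v v)" by (rule hermitian_cscalar_prod[OF A herm v(1) v(1)])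
  also have "\<dots> = cnj d * (v \<bullet>c v)" using v by (simp add: ev cscalar_prod_smult_right)
  finally have "d = cnj d" using v by simp
  then show ?thesis by (simp add: Reals_cnj_iff)
qed

lemma hermitian_invertible_eigenbasis:
  fixes A :: "complex mat"
  assumes A: "A \<in> carrier_mat n n" and herm: "mat_adjoint A = A" and inv: "invertible_mat A"
  shows "\<exists>v r. orthonormal_fam n v {..<n} \<and>
    (\<forall>j<n. r j \<noteq> 0 \<and> A *\<^sub>v v j = complex_of_real (r j) \<cdot>\<^sub>v v j)"
proof -
  obtain v d where v: "orthonormal_fam n v {..<n}" and ev: "\<forall>j<n. A *\<^sub>v v j = d j \<cdot>\<^sub>v v j"
    using hermitian_orthonormal_eigenbasis[OF A herm] by blast
  have vc: "v j \<in> carrier_vec n" and v0: "v j \<noteq> 0\<^sub>v n" if "j < n" for j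
    using orthonormal_fam_carrier[OF v] orthonormal_fam_cscalar_prod[OF v, of j j] that by auto
  have real: "d j = complex_of_real (Re (d j))" if "j < n" for j
    using hermitian_eigenvalue_real[OF A herm vc[OF that] v0[OF that]] ev that
    by (simp add: Reals_cases)
  have "Re (d j) \<noteq> 0" if j: "j < n" for j
  proof
    assume "Re (d j) = 0"
    then have "A *\<^sub>v v j = 0\<^sub>v n" using ev real[OF j] vc[OF j] j by auto
    then show False using invertible_mat_mult_vec_eq_0[OF inv A vc[OF j]] v0[OF j] by blast
  qed
  then show ?thesis using v ev real by (intro exI[of _ v] exI[of _ "\<lambda>j. Re (d j)"]) auto
qed

lemma imaginary_mat_conjugate_eigenvector:
  fixes L :: "complex mat"
  assumes L: "L \<in> carrier_mat n n" and imag: "\<And>i j. i < n \<Longrightarrow> j < n \<Longrightarrow> cnj (L $$ (i, j)) = - L $$ (i, j)"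
    and v: "v \<in> carrier_vec n" and ev: "L *\<^sub>v v = complex_of_real r \<cdot>\<^sub>v v"
  shows "L *\<^sub>v conjugate v = complex_of_real (- r) \<cdot>\<^sub>v conjugate v"
proof (rule eq_vecI)
  fix i assume "i < dim_vec (complex_of_real (- r) \<cdot>\<^sub>v conjugate v)"
  then have i: "i < n" using v by simp
  have "(L *\<^sub>v conjugate v) $ i = - cnj (\<Sum>k<n. L $$ (i, k) * v $ k)"
    by (subst mult_mat_vec_index_sum[OF L _ i])
      (use v i imag in \<open>auto simp: cnj_sum sum_negf[symmetric] intro!: sum.cong\<close>)
  also have "\<dots> = - cnj ((L *\<^sub>v v) $ i)" by (simp only: mult_mat_vec_index_sum[OF L v i])
  also have "\<dots> = (complex_of_real (- r) \<cdot>\<^sub>v conjugate v) $ i" using v i by (simp add: ev)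
  finally show "(L *\<^sub>v conjugate v) $ i = (complex_of_real (- r) \<cdot>\<^sub>v conjugate v) $ i" .
qed (use L v in simp)

lemma hermitian_eigenvectors_orthogonal:
  fixes A :: "complex mat"
  assumes A: "A \<in> carrier_mat n n" and herm: "mat_adjoint A = A"
    and x: "x \<in> carrier_vec n" and y: "y \<in> carrier_vec n"
    and ex: "A *\<^sub>v x = complex_of_real a \<cdot>\<^sub>v x" and ey: "A *\<^sub>v y = complex_of_real b \<cdot>\<^sub>v y"
    and ab: "a \<noteq> b"
  shows "x \<bullet>c y = 0"
proof -
  have "complex_of_real a * (x \<bullet>c y) = (A *\<^sub>v x) \<bullet>c y" using x y by (simp add: ex cscalar_prod_smult_left)
  also have "\<dots> = x \<bullet>c (A *\<^sub>v y)" by (rule hermitian_cscalar_prod[OF A herm x y])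
  also have "\<dots> = complex_of_real b * (x \<bullet>c y)" using x y by (simp add: ey cscalar_prod_smult_right)
  finally show ?thesis using ab by simp
qed

lemma imaginary_hermitian_eigenvector_orthogonal_conjugate:
  fixes L :: "complex mat"
  assumes L: "L \<in> carrier_mat n n" and herm: "mat_adjoint L = L"
    and imag: "\<And>i j. i < n \<Longrightarrow> j < n \<Longrightarrow> cnj (L $$ (i, j)) = - L $$ (i, j)"
    and x: "x \<in> carrier_vec n" and y: "y \<in> carrier_vec n"
    and ex: "L *\<^sub>v x = complex_of_real a \<cdot>\<^sub>v x" and ey: "L *\<^sub>v y = complex_of_real b \<cdot>\<^sub>v y"
    and ab: "a \<noteq> - b"
  shows "x \<bullet>c conjugate y = 0"
  using hermitian_eigenvectors_orthogonal[OF L herm x _ ex imaginary_mat_conjugate_eigenvector[OF L imag y ey] ab] y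
  by simp

lemma imaginary_hermitian_eigenvalue_balance:
  fixes L :: "complex mat"
  assumes L: "L \<in> carrier_mat N N" and herm: "mat_adjoint L = L"
    and imag: "\<And>i j. i < N \<Longrightarrow> j < N \<Longrightarrow> cnj (L $$ (i, j)) = - L $$ (i, j)"
    and v: "orthonormal_fam N v {..<N}" and r: "\<And>j. j < N \<Longrightarrow> r j \<noteq> 0"
    and Lv: "\<And>j. j < N \<Longrightarrow> L *\<^sub>v v j = complex_of_real (r j) \<cdot>\<^sub>v v j"
  shows "N = 2 * card {j. j < N \<and> r j > 0}"
proof -
  define P where "P = {j. j < N \<and> r j > 0}"
  define Q where "Q = {j. j < N \<and> r j < 0}"
  have "card P = card Q"
  proof (rule card_eq_if_cross_orthogonal[OF v orthonormal_fam_conjugate[OF v]])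
    fix j k assume jk: "j < N" "k < N" and "(j \<in> P) \<noteq> (k \<in> Q)"
    then have "r j \<noteq> - r k" using r by (auto simp: P_def Q_def)
    with jk show "v j \<bullet>c conjugate (v k) = 0"
      using imaginary_hermitian_eigenvector_orthogonal_conjugate[OF L herm imag] v Lv
      by (simp add: orthonormal_fam_carrier)
  qed (auto simp: P_def Q_def)
  moreover have "card P + card Q = N"
  proof -
    have "r j > 0 \<or> r j < 0" if "j < N" for j using r[OF that] by linarith
    then have "P \<union> Q = {..<N}" by (auto simp: P_def Q_def)
    moreover have "P \<inter> Q = {}" "finite P" "finite Q" by (auto simp: P_def Q_def)
    ultimately show ?thesis using card_Un_disjoint[of P Q] by simp
  qed
  ultimately show ?thesis by (simp add: P_def)
qed

lemma imaginary_hermitian_paired_eigenbasis: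
  fixes L :: "complex mat"
  assumes L: "L \<in> carrier_mat N N" and herm: "mat_adjoint L = L"
    and imag: "\<And>i j. i < N \<Longrightarrow> j < N \<Longrightarrow> cnj (L $$ (i, j)) = - L $$ (i, j)"
    and inv: "invertible_mat L"
  shows "even N \<and> (\<exists>(alpha :: nat \<Rightarrow> real) a.
    orthonormal_fam N (\<lambda>(i, k). a i k) (UNIV \<times> {..<N div 2}) \<and>
    (\<forall>k<N div 2. alpha k \<noteq> 0 \<and>
       L *\<^sub>v a True k = complex_of_real (alpha k) \<cdot>\<^sub>v a True k \<and>
       L *\<^sub>v a False k = complex_of_real (- alpha k) \<cdot>\<^sub>v a False k))"
proof -
  obtain v r where v: "orthonormal_fam N v {..<N}" and r: "\<And>j. j < N \<Longrightarrow> r j \<noteq> 0"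
    and Lv: "\<And>j. j < N \<Longrightarrow> L *\<^sub>v v j = complex_of_real (r j) \<cdot>\<^sub>v v j"
    using hermitian_invertible_eigenbasis[OF L herm inv] by blast
  have vc: "\<And>j. j < N \<Longrightarrow> v j \<in> carrier_vec N" using v by (simp add: orthonormal_fam_carrier)
  define P where "P = {j. j < N \<and> r j > 0}"
  have N: "N = 2 * card P"
    unfolding P_def by (rule imaginary_hermitian_eigenvalue_balance[OF L herm imag v r Lv])
  moreover have "finite P" by (simp add: P_def)
  ultimately obtain h where h: "bij_betw h {..<N div 2} P"
    using ex_bij_betw_nat_finite[of P] by (auto simp: atLeast0LessThan)
  then have h_inj: "inj_on h {..<N div 2}" and hP: "h ` {..<N div 2} \<subseteq> {..<N}"
    unfolding bij_betw_def P_def by auto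
  have hN: "h k < N" and h_pos: "r (h k) > 0" if "k < N div 2" for k
    using h that unfolding bij_betw_def P_def by auto
  define a where "a = (\<lambda>i k. if i then v (h k) else conjugate (v (h k)))"
  have "orthonormal_fam N (\<lambda>(i, k). a i k) (UNIV \<times> {..<N div 2})"
  proof (rule orthonormal_fam_bool_prod)
    show "orthonormal_fam N (a True) {..<N div 2}"
      using orthonormal_fam_reindex[OF v h_inj hP] by (simp add: a_def comp_def)
    show "orthonormal_fam N (a False) {..<N div 2}"
      using orthonormal_fam_reindex[OF orthonormal_fam_conjugate[OF v] h_inj hP] by (simp add: a_def comp_def)
    fix k l assume "k \<in> {..<N div 2}" "l \<in> {..<N div 2}"
    then have kl: "k < N div 2" "l < N div 2" by simp_all
    then have hk: "h k < N" and hl: "h l < N" by (simp_all add: hN)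
    have "r (h k) \<noteq> - r (h l)" using h_pos[OF kl(1)] h_pos[OF kl(2)] by linarith
    from imaginary_hermitian_eigenvector_orthogonal_conjugate[OF L herm imag vc[OF hk] vc[OF hl]
        Lv[OF hk] Lv[OF hl] this]
    show "a True k \<bullet>c a False l = 0" by (simp add: a_def)
  qed
  moreover have "\<forall>k<N div 2. r (h k) \<noteq> 0 \<and>
      L *\<^sub>v a True k = complex_of_real (r (h k)) \<cdot>\<^sub>v a True k \<and>
      L *\<^sub>v a False k = complex_of_real (- r (h k)) \<cdot>\<^sub>v a False k"
    using r Lv hN imaginary_mat_conjugate_eigenvector[OF L imag vc Lv] by (simp add: a_def)
  ultimately show ?thesis
    using N by (intro conjI exI[of _ "\<lambda>k. r (h k)"] exI[of _ a]) simp_all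
qed

section \<open>Tensor form of a paired eigenbasis\<close>

lemma mat_sum_outer_orthonormal:
  assumes b: "orthonormal_fam m b {..<m}"
  shows "mat_sum m {..<m} (\<lambda>k. c k \<cdot>\<^sub>m outer (b k) (b k)) \<in> carrier_mat m m"
    and "\<And>k. k < m \<Longrightarrow> mat_sum m {..<m} (\<lambda>k. c k \<cdot>\<^sub>m outer (b k) (b k)) *\<^sub>v b k = c k \<cdot>\<^sub>v b k"
proof -
  have bc: "\<And>k. k < m \<Longrightarrow> b k \<in> carrier_vec m" using b by (simp add: orthonormal_fam_carrier)
  have "mat_sum m {..<m} (\<lambda>k. c k \<cdot>\<^sub>m outer (b k) (b k)) = outer_sum m {..<m} (\<lambda>k. c k \<cdot>\<^sub>v b k) b"
    by (rule eq_matI)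
      (use bc[THEN carrier_vecD] in \<open>auto simp: mat_sum_def outer_sum_def outer_def intro!: sum.cong\<close>)
  then show "mat_sum m {..<m} (\<lambda>k. c k \<cdot>\<^sub>m outer (b k) (b k)) \<in> carrier_mat m m"
    and "\<And>k. k < m \<Longrightarrow> mat_sum m {..<m} (\<lambda>k. c k \<cdot>\<^sub>m outer (b k) (b k)) *\<^sub>v b k = c k \<cdot>\<^sub>v b k"
    by (auto intro!: outer_sum_mult_orthonormal[OF _ b] simp: bc)
qed

lemma S_y_carrier: "S_y \<in> carrier_mat 2 2"
  unfolding S_y_def by simp

lemma kron_S_y_mult_kron_vec:
  assumes e: "e \<in> carrier_vec 2" and Se: "S_y *\<^sub>v e = s \<cdot>\<^sub>v e"
    and M: "M \<in> carrier_mat m m" and y: "y \<in> carrier_vec m" and My: "M *\<^sub>v y = c \<cdot>\<^sub>v y"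
  shows "kron_mat S_y M *\<^sub>v kron_vec e y = (s * c) \<cdot>\<^sub>v kron_vec e y"
  using kron_mat_mult_kron_vec[OF S_y_carrier M e y] by (simp add: Se My kron_vec_smult)

lemma paired_eigenbasis_tensor_form:
  fixes L :: "complex mat" and alpha :: "nat \<Rightarrow> real"
  assumes L: "L \<in> carrier_mat (2 * m) (2 * m)"
    and a: "orthonormal_fam (2 * m) (\<lambda>(i, k). a i k) (UNIV \<times> {..<m})"
    and La: "\<forall>k<m. L *\<^sub>v a True k = complex_of_real (alpha k) \<cdot>\<^sub>v a True k \<and>
        L *\<^sub>v a False k = complex_of_real (- alpha k) \<cdot>\<^sub>v a False k"
    and e: "orthonormal_fam 2 e UNIV" and eT: "S_y *\<^sub>v e True = e True" and eF: "S_y *\<^sub>v e False = - e False"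
    and b: "orthonormal_fam m b {..<m}"
  shows "(\<exists>V. V \<in> carrier_mat (2 * m) (2 * m) \<and> (\<forall>i. \<forall>k<m. V *\<^sub>v a i k = kron_vec (e i) (b k))) \<and>
    (\<forall>V. V \<in> carrier_mat (2 * m) (2 * m) \<and> (\<forall>i. \<forall>k<m. V *\<^sub>v a i k = kron_vec (e i) (b k)) \<longrightarrow>
       unitary_mat (2 * m) V \<and>
       V * L * mat_adjoint V = kron_mat S_y (mat_sum m {..<m}
         (\<lambda>k. complex_of_real (alpha k) \<cdot>\<^sub>m outer (b k) (b k))))"
proof -
  define I where "I = (UNIV :: bool set) \<times> {..<m}"
  define u where "u = (\<lambda>(i, k). a i k)"
  define f where "f = (\<lambda>(i, k). kron_vec (e i) (b k))"
  define c where "c = (\<lambda>(i, k). complex_of_real (if i then alpha k else - alpha k))"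
  define M where "M = mat_sum m {..<m} (\<lambda>k. complex_of_real (alpha k) \<cdot>\<^sub>m outer (b k) (b k))"
  have fin: "finite I" and card: "card I = 2 * m" unfolding I_def by (simp_all add: card_cartesian_product)
  have u: "orthonormal_fam (2 * m) u I" using a unfolding u_def I_def .
  have f: "orthonormal_fam (2 * m) f I" using orthonormal_fam_kron[OF e b] unfolding f_def I_def by simp
  have M: "M \<in> carrier_mat m m" unfolding M_def by (rule mat_sum_outer_orthonormal(1)[OF b])
  have K: "kron_mat S_y M \<in> carrier_mat (2 * m) (2 * m)" by (rule kron_mat_carrier[OF S_y_carrier M])
  have S_y_e: "S_y *\<^sub>v e i = (if i then 1 else - 1) \<cdot>\<^sub>v e i" for i
    using eT eF orthonormal_fam_carrier[OF e, of False] by (cases i) auto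
  have Kf: "kron_mat S_y M *\<^sub>v f x = c x \<cdot>\<^sub>v f x" if xI: "x \<in> I" for x
  proof -
    obtain i k where x: "x = (i, k)" and k: "k < m" using xI by (auto simp: I_def)
    have bk: "b k \<in> carrier_vec m" using b k by (simp add: orthonormal_fam_carrier)
    have "M *\<^sub>v b k = complex_of_real (alpha k) \<cdot>\<^sub>v b k"
      unfolding M_def by (rule mat_sum_outer_orthonormal(2)[OF b k])
    from kron_S_y_mult_kron_vec[OF orthonormal_fam_carrier[OF e UNIV_I] S_y_e M bk this]
    show ?thesis by (cases i) (auto simp: x f_def c_def)
  qed
  have Lu: "L *\<^sub>v u x = c x \<cdot>\<^sub>v u x" if "x \<in> I" for x
    using that La by (auto simp: I_def u_def c_def)
  have V_iff: "(\<forall>i. \<forall>k<m. V *\<^sub>v a i k = kron_vec (e i) (b k)) \<longleftrightarrow> (\<forall>x\<in>I. V *\<^sub>v u x = f x)" for V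
    by (auto simp: I_def u_def f_def)
  have "\<exists>V. V \<in> carrier_mat (2 * m) (2 * m) \<and> (\<forall>x\<in>I. V *\<^sub>v u x = f x)"
    using outer_sum_mult_orthonormal[OF fin u orthonormal_fam_carrier[OF f]]
    by (intro exI[of _ "outer_sum (2 * m) I f u"]) simp
  moreover have "unitary_mat (2 * m) V \<and> V * L * mat_adjoint V = kron_mat S_y M"
    if V: "V \<in> carrier_mat (2 * m) (2 * m)" and Vu: "\<forall>x\<in>I. V *\<^sub>v u x = f x" for V
  proof
    show unitary: "unitary_mat (2 * m) V"
      by (rule unitary_if_maps_orthonormal_basis[OF fin card u f V]) (use Vu in blast)
    show "V * L * mat_adjoint V = kron_mat S_y M"
      by (rule unitary_conj_eq_of_eigenbases[OF fin card u f unitary _ L K Lu Kf]) (use Vu in blast)+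
  qed
  ultimately show ?thesis unfolding V_iff M_def by blast
qed

section \<open>The SLD of a diagonal state\<close>

lemma diag_state_carrier: "diag_state N p \<in> carrier_mat N N"
  unfolding diag_state_def by simp

lemma mult_diag_state_index:
  assumes A: "A \<in> carrier_mat N N" and n: "n < N" and m: "m < N"
  shows "(A * diag_state N p) $$ (n, m) = A $$ (n, m) * complex_of_real (p m)"
proof -
  have "(A * diag_state N p) $$ (n, m) = (\<Sum>k<N. A $$ (n, k) * diag_state N p $$ (k, m))"
    by (rule mult_mat_index_sum[OF A diag_state_carrier n m])
  also have "\<dots> = (\<Sum>k<N. if k = m then A $$ (n, m) * complex_of_real (p m) else 0)"
    by (rule sum.cong) (use m in \<open>auto simp: diag_state_def\<close>)
  finally show ?thesis using m by simp
qed

lemma diag_state_mult_index: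
  assumes A: "A \<in> carrier_mat N N" and n: "n < N" and m: "m < N"
  shows "(diag_state N p * A) $$ (n, m) = complex_of_real (p n) * A $$ (n, m)"
proof -
  have "(diag_state N p * A) $$ (n, m) = (\<Sum>k<N. diag_state N p $$ (n, k) * A $$ (k, m))"
    by (rule mult_mat_index_sum[OF diag_state_carrier A n m])
  also have "\<dots> = (\<Sum>k<N. if k = n then complex_of_real (p n) * A $$ (n, m) else 0)"
    by (rule sum.cong) (use n in \<open>auto simp: diag_state_def\<close>)
  finally show ?thesis using n by simp
qed

lemma SLD_diag_state_index:
  assumes G: "G \<in> carrier_mat N N" and L: "is_SLD N G (diag_state N p) L"
    and n: "n < N" and m: "m < N" and p: "p n + p m \<noteq> 0"
  shows "L $$ (n, m) = 2 * \<i> * G $$ (n, m) * complex_of_real ((p n - p m) / (p n + p m))"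
proof -
  have Lc: "L \<in> carrier_mat N N" and eq: "(- \<i>) \<cdot>\<^sub>m (G * diag_state N p - diag_state N p * G) =
      (1 / 2 :: complex) \<cdot>\<^sub>m (diag_state N p * L + L * diag_state N p)"
    using L unfolding is_SLD_def by auto
  have "- \<i> * (G $$ (n, m) * complex_of_real (p m) - complex_of_real (p n) * G $$ (n, m)) =
      1 / 2 * (complex_of_real (p n) * L $$ (n, m) + L $$ (n, m) * complex_of_real (p m))"
    using arg_cong[OF eq, of "\<lambda>M. M $$ (n, m)"] G Lc n m diag_state_carrier[of N p]
    by (simp add: mult_diag_state_index diag_state_mult_index del: index_mult_mat(1))
  then have key: "L $$ (n, m) * complex_of_real (p n + p m) =
      2 * \<i> * G $$ (n, m) * complex_of_real (p n - p m)"
    by (simp add: field_simps)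
  have "complex_of_real (p n + p m) \<noteq> 0" using p of_real_eq_0_iff by blast
  with key have "L $$ (n, m) = 2 * \<i> * G $$ (n, m) * complex_of_real (p n - p m) / complex_of_real (p n + p m)"
    by (metis nonzero_eq_divide_eq)
  then show ?thesis by (simp only: of_real_divide times_divide_eq_right)
qed

lemma SLD_diag_state_imaginary:
  assumes p_pos: "\<forall>n<N. p n > 0" and G: "G \<in> carrier_mat N N"
    and G_real: "\<forall>n<N. \<forall>m<N. G $$ (n, m) \<in> \<real>"
    and L: "is_SLD N G (diag_state N p) L" and n: "n < N" and m: "m < N"
  shows "cnj (L $$ (n, m)) = - L $$ (n, m)"
proof -
  obtain g where "G $$ (n, m) = complex_of_real g" using G_real n m by (blast elim: Reals_cases)
  moreover have "p n + p m \<noteq> 0" using p_pos n m by (metis add_pos_pos less_irrefl)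
  ultimately show ?thesis using SLD_diag_state_index[OF G L n m] by simp
qed

theorem proposition3:
  fixes N :: nat and p :: "nat \<Rightarrow> real" and G L :: "complex mat"
  assumes N_even: "even N"
    and p_pos: "\<forall>n<N. p n > 0"
    and p_sum: "(\<Sum>n<N. p n) = 1"
    and G_carrier: "G \<in> carrier_mat N N"
    and G_herm: "mat_adjoint G = G"
    and G_real: "\<forall>n<N. \<forall>m<N. G $$ (n, m) \<in> \<real>"
    and L_SLD: "is_SLD N G (diag_state N p) L"
    and L_full_rank: "invertible_mat L"
  shows "\<exists>(alpha :: nat \<Rightarrow> real) (a :: bool \<Rightarrow> nat \<Rightarrow> complex vec).
     \<comment> \<open>(3.1): a True k = |alpha_{+,k}>, a False k = |alpha_{-,k}>, k = 0..N/2-1\<close>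
     orthonormal_fam N (\<lambda>(i,k). a i k) (UNIV \<times> {..<N div 2}) \<and>
     (\<forall>k<N div 2. alpha k \<noteq> 0 \<and>
        L *\<^sub>v a True k = complex_of_real (alpha k) \<cdot>\<^sub>v a True k \<and>
        L *\<^sub>v a False k = complex_of_real (- alpha k) \<cdot>\<^sub>v a False k) \<and>
     \<comment> \<open>(3.2): for any eigenbasis |+>,|-> of S_y and any orthonormal basis |k> of C^(N/2)\<close>
     (\<forall>(e :: bool \<Rightarrow> complex vec) (b :: nat \<Rightarrow> complex vec).
        orthonormal_fam 2 e UNIV \<and>
        S_y *\<^sub>v e True = e True \<and> S_y *\<^sub>v e False = - e False \<and>
        orthonormal_fam (N div 2) b {..<N div 2} \<longrightarrow>
        (\<exists>V. V \<in> carrier_mat N N \<and>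
              (\<forall>i. \<forall>k<N div 2. V *\<^sub>v a i k = kron_vec (e i) (b k))) \<and>
        (\<forall>V. V \<in> carrier_mat N N \<and>
              (\<forall>i. \<forall>k<N div 2. V *\<^sub>v a i k = kron_vec (e i) (b k)) \<longrightarrow>
              unitary_mat N V \<and>
              V * L * mat_adjoint V =
                kron_mat S_y (mat_sum (N div 2) {..<N div 2}
                   (\<lambda>k. complex_of_real (alpha k) \<cdot>\<^sub>m outer (b k) (b k)))))"
proof -
  have L: "L \<in> carrier_mat N N" and L_herm: "mat_adjoint L = L"
    using L_SLD unfolding is_SLD_def by auto
  have L_imag: "\<And>i j. i < N \<Longrightarrow> j < N \<Longrightarrow> cnj (L $$ (i, j)) = - L $$ (i, j)"
    by (rule SLD_diag_state_imaginary[OF p_pos G_carrier G_real L_SLD])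
  obtain alpha :: "nat \<Rightarrow> real" and a where
    a: "orthonormal_fam N (\<lambda>(i, k). a i k) (UNIV \<times> {..<N div 2})"
    and La: "\<forall>k<N div 2. alpha k \<noteq> 0 \<and>
      L *\<^sub>v a True k = complex_of_real (alpha k) \<cdot>\<^sub>v a True k \<and>
      L *\<^sub>v a False k = complex_of_real (- alpha k) \<cdot>\<^sub>v a False k"
    using imaginary_hermitian_paired_eigenbasis[OF L L_herm L_imag L_full_rank] by blast
  have N: "2 * (N div 2) = N" using N_even by simp
  have "\<forall>k<N div 2. L *\<^sub>v a True k = complex_of_real (alpha k) \<cdot>\<^sub>v a True k \<and>
      L *\<^sub>v a False k = complex_of_real (- alpha k) \<cdot>\<^sub>v a False k"
    using La by blast
  note tensor_form = paired_eigenbasis_tensor_form[of L "N div 2" a, unfolded N, OF L a this]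
  show ?thesis
    by (rule exI[of _ alpha], rule exI[of _ a], rule conjI[OF a], rule conjI[OF La],
        intro allI impI, elim conjE, rule tensor_form)
qed

end
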